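(* Let $t\ge2$ and consider the complete graph $K_{t+1}$ on vertices $v_1,\dots,v_{t+1}$. Let $\widehat{K}_t$ be any $3$-coloring of the edges among $v_1,\dots,v_t$ containing no rainbow triangle. Then the number of ways to $3$-color the edges incident to $v_{t+1}$ so that the resulting coloring of $K_{t+1}$ still contains no rainbow triangle is at most $t\,2^t$.
   Context: A rainbow triangle is a triangle whose three edges have three distinct colors. Colorings need not be proper. *)

theory Defs
  imports Main "HOL-Library.FuncSet"
begin

text \<open>An edge colouring of a complete graph on vertex set V is a symmetric function
  c :: 'v => 'v => 'k restricted to pairs of distinct vertices of V.\<close>

definition sym_coloring :: "'v set \<Rightarrow> 'k set \<Rightarrow> ('v \<Rightarrow> 'v \<Rightarrow> 'k) \<Rightarrow> bool" where
  "sym_coloring V K c \<longleftrightarrow>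
     (\<forall>x\<in>V. \<forall>y\<in>V. x \<noteq> y \<longrightarrow> c x y \<in> K \<and> c x y = c y x)"

definition rainbow_triangle :: "('v \<Rightarrow> 'v \<Rightarrow> 'k) \<Rightarrow> 'v \<Rightarrow> 'v \<Rightarrow> 'v \<Rightarrow> bool" where
  "rainbow_triangle c x y z \<longleftrightarrow>
     x \<noteq> y \<and> y \<noteq> z \<and> x \<noteq> z \<and>
     c x y \<noteq> c y z \<and> c y z \<noteq> c x z \<and> c x y \<noteq> c x z"

definition rainbow_free :: "'v set \<Rightarrow> ('v \<Rightarrow> 'v \<Rightarrow> 'k) \<Rightarrow> bool" where
  "rainbow_free V c \<longleftrightarrow> (\<forall>x\<in>V. \<forall>y\<in>V. \<forall>z\<in>V. \<not> rainbow_triangle c x y z)"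

text \<open>Colouring of K_{t+1} on {0..t} obtained from a colouring c of the edges among
  {0..<t} and a colouring f of the edges {i, t} (i < t) incident to the new vertex t.\<close>

definition extend_coloring :: "nat \<Rightarrow> (nat \<Rightarrow> nat \<Rightarrow> 'k) \<Rightarrow> (nat \<Rightarrow> 'k) \<Rightarrow> nat \<Rightarrow> nat \<Rightarrow> 'k" where
  "extend_coloring t c f x y = (if x = t then f y else if y = t then f x else c x y)"

end

theory Submission
  imports Defs
begin

text \<open>Call a colouring f of the edges from a new apex to the vertices 0, ..., n-1 admissible if no
  triangle through the apex is rainbow. Restricting an admissible colouring to the first n vertices
  leaves an admissible colouring g, and the colour of the edge to vertex n must then lie in
  {g j, c n j} for every j < n with g j \<noteq> c n j. So every g except the single one copying
  c n extends in at most two ways, whence (with k colours) the number a n of admissible colourings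
  satisfies a (n+1) \<le> 2 a n + k - 2, and a n \<le> (k-1) 2^n - k + 2. For k = 3 this is
  2^(n+1) - 1 \<le> n 2^n. The colouring of the old vertices is never required to be symmetric or
  rainbow-free.\<close>

definition apex_rainbow_free :: "(nat \<Rightarrow> nat \<Rightarrow> 'k) \<Rightarrow> nat \<Rightarrow> (nat \<Rightarrow> 'k) \<Rightarrow> bool" where
  "apex_rainbow_free c n f \<longleftrightarrow>
     (\<forall>i<n. \<forall>j<n. i \<noteq> j \<longrightarrow> f i = f j \<or> c i j = f i \<or> c i j = f j)"

definition apex_colorings :: "(nat \<Rightarrow> nat \<Rightarrow> 'k) \<Rightarrow> 'k set \<Rightarrow> nat \<Rightarrow> (nat \<Rightarrow> 'k) set" where
  "apex_colorings c K n = {f \<in> {0..<n} \<rightarrow>\<^sub>E K. apex_rainbow_free c n f}"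

definition extension_choices :: "(nat \<Rightarrow> nat \<Rightarrow> 'k) \<Rightarrow> 'k set \<Rightarrow> nat \<Rightarrow> (nat \<Rightarrow> 'k) \<Rightarrow> 'k set" where
  "extension_choices c K n g = {a \<in> K. \<forall>j<n. g j = a \<or> c n j = a \<or> c n j = g j}"

lemma apex_rainbow_free_if_rainbow_free_extend:
  assumes "rainbow_free {0..t} (extend_coloring t c f)"
  shows "apex_rainbow_free c t f"
  unfolding apex_rainbow_free_def
proof (intro allI impI)
  fix i j assume ij: "i < t" "j < t" "i \<noteq> j"
  with assms have "\<not> rainbow_triangle (extend_coloring t c f) i j t"
    by (auto simp: rainbow_free_def)
  with ij show "f i = f j \<or> c i j = f i \<or> c i j = f j"
    by (auto simp: rainbow_triangle_def extend_coloring_def)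
qed

lemma finite_apex_colorings: "finite K \<Longrightarrow> finite (apex_colorings c K n)"
  unfolding apex_colorings_def by (simp add: finite_PiE)

lemma apex_colorings_0: "apex_colorings c K 0 = {\<lambda>_. undefined}"
  by (auto simp: apex_colorings_def apex_rainbow_free_def)

lemma apex_colorings_Suc_subset:
  "apex_colorings c K (Suc n)
     \<subseteq> (\<lambda>(g, a). g(n := a)) ` (SIGMA g:apex_colorings c K n. extension_choices c K n g)"
proof
  fix f assume "f \<in> apex_colorings c K (Suc n)"
  then have f: "f \<in> {0..<Suc n} \<rightarrow>\<^sub>E K" "apex_rainbow_free c (Suc n) f"
    by (auto simp: apex_colorings_def)
  let ?g = "f(n := undefined)"
  have "?g \<in> {0..<n} \<rightarrow>\<^sub>E K"
    using f(1) by (auto simp: PiE_iff extensional_def)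
  moreover have "apex_rainbow_free c n ?g"
    using f(2) by (auto simp: apex_rainbow_free_def)
  moreover have "f n \<in> extension_choices c K n ?g"
  proof -
    have "f j = f n \<or> c n j = f n \<or> c n j = f j" if "j < n" for j
      using f(2) that unfolding apex_rainbow_free_def
      by (metis less_Suc_eq less_irrefl_nat)
    then show ?thesis
      using f(1) by (auto simp: extension_choices_def)
  qed
  moreover have "f = ?g(n := f n)" by simp
  ultimately show "f \<in> (\<lambda>(g, a). g(n := a)) ` (SIGMA g:apex_colorings c K n. extension_choices c K n g)"
    by (intro image_eqI[where x = "(?g, f n)"]) (auto simp: apex_colorings_def)
qed

lemma card_extension_choices_le_2:
  assumes "g \<in> extensional {0..<n}" and "g \<noteq> restrict (c n) {0..<n}"
  shows "card (extension_choices c K n g) \<le> 2"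
proof -
  have "\<exists>j<n. g j \<noteq> c n j"
  proof (rule ccontr)
    assume "\<not> (\<exists>j<n. g j \<noteq> c n j)"
    then have "g = restrict (c n) {0..<n}"
      by (intro extensionalityI[OF assms(1) restrict_extensional]) auto
    with assms(2) show False ..
  qed
  then obtain j where "j < n" "g j \<noteq> c n j" by blast
  then have "extension_choices c K n g \<subseteq> {g j, c n j}"
    by (auto simp: extension_choices_def)
  then have "card (extension_choices c K n g) \<le> card {g j, c n j}"
    by (intro card_mono) auto
  also have "\<dots> \<le> 2" by (simp add: card_insert_le_m1)
  finally show ?thesis .
qed

lemma card_apex_colorings_Suc:
  assumes "finite K" and "2 \<le> card K"
  shows "card (apex_colorings c K (Suc n)) + 2 \<le> 2 * card (apex_colorings c K n) + card K"
proof -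
  let ?A = "apex_colorings c K n"
  let ?choices = "extension_choices c K n"
  let ?g0 = "restrict (c n) {0..<n}"
  have fin_choices: "finite (?choices g)" for g
    using assms(1) by (simp add: extension_choices_def)
  have fin_A: "finite ?A"
    using assms(1) by (rule finite_apex_colorings)
  have "card (apex_colorings c K (Suc n)) \<le> card ((\<lambda>(g, a). g(n := a)) ` (SIGMA g:?A. ?choices g))"
    using fin_A fin_choices by (intro card_mono apex_colorings_Suc_subset) auto
  also have "\<dots> \<le> card (SIGMA g:?A. ?choices g)"
    by (rule card_image_le) (use fin_A fin_choices in auto)
  also have "\<dots> = (\<Sum>g\<in>?A. card (?choices g))"
    by (rule card_SigmaI) (use fin_A fin_choices in auto)
  also have "\<dots> \<le> (\<Sum>g\<in>?A. 2 + (if g = ?g0 then card K - 2 else 0))"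
  proof (rule sum_mono)
    fix g assume "g \<in> ?A"
    then have "g \<in> extensional {0..<n}" by (auto simp: apex_colorings_def PiE_def)
    moreover have "card (?choices g) \<le> card K"
      using assms(1) by (intro card_mono) (auto simp: extension_choices_def)
    ultimately show "card (?choices g) \<le> 2 + (if g = ?g0 then card K - 2 else 0)"
      using card_extension_choices_le_2[of g n c K] assms(2) by (cases "g = ?g0") auto
  qed
  also have "\<dots> = 2 * card ?A + (\<Sum>g\<in>?A. if g = ?g0 then card K - 2 else 0)"
    by (simp only: sum.distrib) simp
  also have "(\<Sum>g\<in>?A. if g = ?g0 then card K - 2 else 0) \<le> card K - 2"
    using fin_A by (simp add: sum.delta)
  finally show ?thesis using assms(2) by linarith
qed

lemma card_apex_colorings_le:
  assumes "finite K" and "2 \<le> card K"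
  shows "card (apex_colorings c K n) + card K \<le> (card K - 1) * 2 ^ n + 2"
proof (induction n)
  case 0
  then show ?case using assms(2) by (simp add: apex_colorings_0)
next
  case (Suc n)
  with card_apex_colorings_Suc[OF assms, of c n] show ?case
    using assms(2) by simp
qed

theorem lemma4p7:
  fixes t :: nat and c :: "nat \<Rightarrow> nat \<Rightarrow> nat"
  assumes "t \<ge> 2"
    and "sym_coloring {0..<t} {0, 1, 2} c"
    and "rainbow_free {0..<t} c"
  shows "card {f \<in> {0..<t} \<rightarrow>\<^sub>E {0, 1, 2 :: nat}.
                rainbow_free {0..t} (extend_coloring t c f)} \<le> t * 2 ^ t"
proof -
  let ?K = "{0, 1, 2 :: nat}"
  have "{f \<in> {0..<t} \<rightarrow>\<^sub>E ?K. rainbow_free {0..t} (extend_coloring t c f)} \<subseteq> apex_colorings c ?K t"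
    by (auto simp: apex_colorings_def intro: apex_rainbow_free_if_rainbow_free_extend)
  then have "card {f \<in> {0..<t} \<rightarrow>\<^sub>E ?K. rainbow_free {0..t} (extend_coloring t c f)}
      \<le> card (apex_colorings c ?K t)"
    by (intro card_mono finite_apex_colorings) auto
  also have "\<dots> \<le> 2 * 2 ^ t"
    using card_apex_colorings_le[of ?K c t] by simp
  also have "\<dots> \<le> t * 2 ^ t"
    using assms(1) by simp
  finally show ?thesis .
qed

end
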